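(* Let $\lambda>0$ be fixed, and assume there are constants $C_d>C_u>0$ and events $\mathcal{B}_N$ on the predictor sample $\widetilde{\mathbf{x}}^N=(\widetilde{\mathbf{x}}_1,\dots,\widetilde{\mathbf{x}}_N)$, with $\mathbb{P}(\mathcal{B}_N)\to1$, such that on $\mathcal{B}_N$, with $K_0=\lfloor\ln(N)/(2C_d+1)\rfloor$, the eigenvalues $\widehat\mu_1\ge\dots\ge\widehat\mu_N$ of the Gram matrix $G$ satisfy $$\sum_{k=K_0}^N\widehat\mu_k\le\sum_{k=K_0}^Ne^{-C_uk}\quad\text{and}\quad\widehat\mu_{K_0}\ge e^{-C_dK_0}.$$ For a realization with invertible $G=U\Lambda U^\top$ ($U$ orthogonal, $\Lambda=\mathrm{diag}(\widehat\mu_\ell)$), let $D=\mathrm{diag}(\widehat\mu_\ell/(\widehat\mu_\ell+\lambda))$ and $M_m=\frac1NU(I-(I-D)^m)^2\Lambda^{-1}U^\top$. Let $m=m(N)=N^{\frac14\frac{C_u+C_d+1/2}{C_d+1}}$. Then there exists $\delta>0$ such that, uniformly over realizations $\widetilde{\mathbf{x}}^N\in\mathcal{B}_N$ (with $G$ invertible), as $N\to\infty$: 1. $N^{1/2+2\delta}\|M_m^{1/2}\|_F^2=\frac1{N^{1/2-2\delta}}\mathrm{tr}\big((I-(I-D)^m)^2\Lambda^{-1}\big)\to0$; 2. $\|M_m\|_F^2\to0$; 3. $\|M_m\|\to0$.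
   Context: Gram matrix: $G_{ij}=K(\widetilde{\mathbf{x}}_i,\widetilde{\mathbf{x}}_j)/N$ for the additive kernel $K(\mathbf{x},\mathbf{x}')=\sum_{j=1}^d\exp(-|x_j-x_j'|^2/(2\varsigma_j))$. $\|\cdot\|_F$ denotes the Frobenius norm and $\|\cdot\|$ the spectral norm. *)

theory Defs
  imports "HOL-Probability.Probability" "Jordan_Normal_Form.Matrix"
begin

definition addK :: "('d::finite \<Rightarrow> real) \<Rightarrow> ('d \<Rightarrow> real) \<Rightarrow> ('d \<Rightarrow> real) \<Rightarrow> real" where
  "addK vs x x' = (\<Sum>j\<in>UNIV. exp (- ((\<bar>x j - x' j\<bar>) ^ 2) / (2 * vs j)))"

text \<open>Gram matrix G_ij = K(x_i,x_j)/N of the sample x_0,...,x_(N-1) (0-based).\<close>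
definition gram :: "('d::finite \<Rightarrow> real) \<Rightarrow> nat \<Rightarrow> (nat \<Rightarrow> 'd \<Rightarrow> real) \<Rightarrow> real mat" where
  "gram vs N x = Matrix.mat N N (\<lambda>(i,j). addK vs (x i) (x j) / real N)"

definition orthogonal_mat :: "nat \<Rightarrow> real mat \<Rightarrow> bool" where
  "orthogonal_mat n U \<longleftrightarrow> U \<in> carrier_mat n n \<and> transpose_mat U * U = 1\<^sub>m n"

text \<open>G = U diag(mu_1,...,mu_N) U^T with U orthogonal and mu_1 >= ... >= mu_N
  (eigenvalues indexed 1..N; diagonal entry i (0-based) is mu (i+1)).\<close>
definition spectral_decomp :: "nat \<Rightarrow> real mat \<Rightarrow> real mat \<Rightarrow> (nat \<Rightarrow> real) \<Rightarrow> bool" where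
  "spectral_decomp N G U \<mu> \<longleftrightarrow> orthogonal_mat N U
     \<and> G = U * mat_diag N (\<lambda>i. \<mu> (Suc i)) * transpose_mat U
     \<and> (\<forall>k l. 1 \<le> k \<longrightarrow> k \<le> l \<longrightarrow> l \<le> N \<longrightarrow> \<mu> l \<le> \<mu> k)"

definition frob_norm :: "real mat \<Rightarrow> real" where
  "frob_norm A = sqrt (\<Sum>i<dim_row A. \<Sum>j<dim_col A. (A $$ (i,j))^2)"

definition vnorm :: "real vec \<Rightarrow> real" where
  "vnorm v = sqrt (\<Sum>i<dim_vec v. (v $ i)^2)"

definition spec_norm :: "real mat \<Rightarrow> real" where
  "spec_norm A = Sup {vnorm (A *\<^sub>v v) | v. v \<in> carrier_vec (dim_col A) \<and> vnorm v = 1}"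

definition mtrace :: "real mat \<Rightarrow> real" where
  "mtrace A = (\<Sum>i<dim_row A. A $$ (i,i))"

text \<open>Diagonal entries of D and of I - (I - D)^m (m real; (1-d)^m via powr, 0 < 1-d < 1).\<close>
definition dval :: "real \<Rightarrow> real \<Rightarrow> real" where
  "dval lam mu = mu / (mu + lam)"

definition filt :: "real \<Rightarrow> real \<Rightarrow> real \<Rightarrow> real" where
  "filt lam m mu = 1 - (1 - dval lam mu) powr m"

definition Mm :: "real \<Rightarrow> real \<Rightarrow> nat \<Rightarrow> real mat \<Rightarrow> (nat \<Rightarrow> real) \<Rightarrow> real mat" where
  "Mm lam m N U \<mu> = (1 / real N) \<cdot>\<^sub>m (U * mat_diag N (\<lambda>i. (filt lam m (\<mu> (Suc i)))^2 / \<mu> (Suc i)) * transpose_mat U)"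

definition Mm_sqrt :: "real \<Rightarrow> real \<Rightarrow> nat \<Rightarrow> real mat \<Rightarrow> (nat \<Rightarrow> real) \<Rightarrow> real mat" where
  "Mm_sqrt lam m N U \<mu> = U * mat_diag N (\<lambda>i. sqrt ((filt lam m (\<mu> (Suc i)))^2 / \<mu> (Suc i) / real N)) * transpose_mat U"

definition trace_term :: "real \<Rightarrow> real \<Rightarrow> nat \<Rightarrow> (nat \<Rightarrow> real) \<Rightarrow> real" where
  "trace_term lam m N \<mu> = mtrace (mat_diag N (\<lambda>i. (filt lam m (\<mu> (Suc i)))^2) * mat_diag N (\<lambda>i. 1 / \<mu> (Suc i)))"

definition K0 :: "real \<Rightarrow> nat \<Rightarrow> nat" where
  "K0 Cd N = nat \<lfloor>ln (real N) / (2 * Cd + 1)\<rfloor>"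

definition mN :: "real \<Rightarrow> real \<Rightarrow> nat \<Rightarrow> real" where
  "mN Cu Cd N = real N powr ((1/4) * (Cu + Cd + 1/2) / (Cd + 1))"

end

theory Submission
  imports Defs "Jordan_Normal_Form.Determinant"
begin

(*
  M_m^(1/2) and M_m are conjugates by the orthogonal matrix U of diagonal
  matrices, so with T = tr((I-(I-D)^m)^2 \<Lambda>^-1) = \<Sum>\<^sub>k f(\<mu>\<^sub>k)^2/\<mu>\<^sub>k we get
  ||M_m^(1/2)||_F^2 = T/N and ||M_m|| \<le> ||M_m||_F \<le> T/N; here f(\<mu>) = 1 - (\<lambda>/(\<mu>+\<lambda>))^m
  lies between 0 and min 1 (m\<mu>/\<lambda>). The Gaussian kernel is positive semidefinite (expand
  exp(a\<^sub>i a\<^sub>j/s) into its power series), so an invertible Gram matrix has positive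
  eigenvalues.

  Split T at K0 \<approx> ln N/(2C\<^sub>d+1). The at most ln N terms with k < K0 are each at most
  1/\<mu>\<^sub>K\<^sub>0 \<le> e^(C\<^sub>d K0) \<le> N^(C\<^sub>d/(2C\<^sub>d+1)); the remaining ones sum to at most
  (m/\<lambda>)^2 \<Sum>\<^sub>k\<^sub>\<ge>\<^sub>K\<^sub>0 \<mu>\<^sub>k \<le> (m/\<lambda>)^2 e^(-C\<^sub>u(K0-1))/(1-e^(-C\<^sub>u)), which is of order
  N^(2p - C\<^sub>u/(2C\<^sub>d+1)) for m = N^p. Both exponents are below 1/2, so T = o(N^(1/2-2\<delta>))
  uniformly on B N for small \<delta> > 0.
*)

section \<open>Frobenius and spectral norms\<close>

lemma frob_norm_square: "(frob_norm A)\<^sup>2 = (\<Sum>i<dim_row A. \<Sum>j<dim_col A. (A $$ (i,j))\<^sup>2)"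
  unfolding frob_norm_def by (rule real_sqrt_pow2) (intro sum_nonneg zero_le_power2)

lemma frob_norm_nonneg: "0 \<le> frob_norm A"
  unfolding frob_norm_def by (intro real_sqrt_ge_zero sum_nonneg zero_le_power2)

lemma frob_norm_smult_square: "(frob_norm (c \<cdot>\<^sub>m A))\<^sup>2 = c\<^sup>2 * (frob_norm A)\<^sup>2"
  unfolding frob_norm_square by (simp add: sum_distrib_left power_mult_distrib)

lemma orthogonal_mat_carrier: "orthogonal_mat n U \<Longrightarrow> U \<in> carrier_mat n n"
  by (simp add: orthogonal_mat_def)

lemma orthogonal_mat_columns_orthonormal:
  assumes "orthogonal_mat n U" "k < n" "l < n"
  shows "(\<Sum>i<n. U $$ (i,k) * U $$ (i,l)) = (if k = l then 1 else 0)"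
proof -
  have U: "U \<in> carrier_mat n n" and UTU: "transpose_mat U * U = 1\<^sub>m n"
    using assms(1) unfolding orthogonal_mat_def by auto
  have "(transpose_mat U * U) $$ (k,l) = (\<Sum>i<n. U $$ (i,k) * U $$ (i,l))"
    using U assms by (simp add: scalar_prod_def atLeast0LessThan)
  then show ?thesis using UTU assms by simp
qed

lemma orthogonal_mat_sum_square_mult:
  assumes O: "orthogonal_mat n U"
  shows "(\<Sum>j<n. (\<Sum>k<n. U $$ (j,k) * c k)\<^sup>2) = (\<Sum>k<n. (c k)\<^sup>2)"
proof -
  have "(\<Sum>j<n. (\<Sum>k<n. U $$ (j,k) * c k)\<^sup>2)
      = (\<Sum>j<n. \<Sum>k<n. \<Sum>l<n. c k * c l * (U $$ (j,k) * U $$ (j,l)))"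
    by (simp add: power2_eq_square sum_product mult_ac)
  also have "\<dots> = (\<Sum>k<n. \<Sum>j<n. \<Sum>l<n. c k * c l * (U $$ (j,k) * U $$ (j,l)))"
    by (rule sum.swap)
  also have "\<dots> = (\<Sum>k<n. \<Sum>l<n. \<Sum>j<n. c k * c l * (U $$ (j,k) * U $$ (j,l)))"
    by (rule sum.cong[OF refl], rule sum.swap)
  also have "\<dots> = (\<Sum>k<n. \<Sum>l<n. c k * c l * (\<Sum>j<n. U $$ (j,k) * U $$ (j,l)))"
    by (simp add: sum_distrib_left)
  also have "\<dots> = (\<Sum>k<n. \<Sum>l<n. if l = k then c k * c l else 0)"
    by (intro sum.cong refl) (simp add: orthogonal_mat_columns_orthonormal[OF O])
  also have "\<dots> = (\<Sum>k<n. (c k)\<^sup>2)"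
    by (simp add: power2_eq_square)
  finally show ?thesis .
qed

lemma index_conj_mat_diag:
  assumes "U \<in> carrier_mat n n" "i < n" "j < n"
  shows "(U * mat_diag n d * transpose_mat U) $$ (i,j) = (\<Sum>k<n. U $$ (i,k) * d k * U $$ (j,k))"
proof -
  have "U * mat_diag n d = Matrix.mat n n (\<lambda>(i,j). U $$ (i,j) * d j)"
    using mat_diag_mult_right[OF assms(1)] by simp
  then show ?thesis using assms by (simp add: scalar_prod_def atLeast0LessThan)
qed

lemma frob_norm_conj_mat_diag_square:
  assumes O: "orthogonal_mat n U"
  shows "(frob_norm (U * mat_diag n d * transpose_mat U))\<^sup>2 = (\<Sum>k<n. (d k)\<^sup>2)"
proof -
  have U: "U \<in> carrier_mat n n" using O by (rule orthogonal_mat_carrier)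
  have "(frob_norm (U * mat_diag n d * transpose_mat U))\<^sup>2
      = (\<Sum>i<n. \<Sum>j<n. (\<Sum>k<n. U $$ (j,k) * (U $$ (i,k) * d k))\<^sup>2)"
    using U by (simp add: frob_norm_square index_conj_mat_diag mult.commute del: index_mult_mat(1))
  also have "\<dots> = (\<Sum>i<n. \<Sum>k<n. (U $$ (i,k) * d k)\<^sup>2)"
    by (simp add: orthogonal_mat_sum_square_mult[OF O])
  also have "\<dots> = (\<Sum>k<n. (d k)\<^sup>2 * (\<Sum>i<n. U $$ (i,k) * U $$ (i,k)))"
    by (subst sum.swap) (simp add: sum_distrib_left power2_eq_square mult_ac)
  also have "\<dots> = (\<Sum>k<n. (d k)\<^sup>2)"
    by (simp add: orthogonal_mat_columns_orthonormal[OF O])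
  finally show ?thesis .
qed

lemma vnorm_nonneg: "0 \<le> vnorm v"
  unfolding vnorm_def by (intro real_sqrt_ge_zero sum_nonneg zero_le_power2)

lemma vnorm_mult_mat_vec_le:
  assumes A: "A \<in> carrier_mat n m" and v: "v \<in> carrier_vec m"
  shows "vnorm (A *\<^sub>v v) \<le> frob_norm A * vnorm v"
proof -
  have "(\<Sum>i<n. ((A *\<^sub>v v) $ i)\<^sup>2) = (\<Sum>i<n. (\<Sum>j<m. A $$ (i,j) * v $ j)\<^sup>2)"
    using A v by (intro sum.cong refl) (simp add: scalar_prod_def atLeast0LessThan)
  also have "\<dots> \<le> (\<Sum>i<n. (\<Sum>j<m. (A $$ (i,j))\<^sup>2) * (\<Sum>j<m. (v $ j)\<^sup>2))"
    by (intro sum_mono Cauchy_Schwarz_ineq_sum)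
  also have "\<dots> = (frob_norm A * vnorm v)\<^sup>2"
    using A v unfolding power_mult_distrib frob_norm_square vnorm_def
    by (simp add: sum_distrib_right sum_nonneg)
  finally have "(vnorm (A *\<^sub>v v))\<^sup>2 \<le> (frob_norm A * vnorm v)\<^sup>2"
    using A unfolding vnorm_def by (simp add: sum_nonneg)
  then show ?thesis
    by (rule power2_le_imp_le) (simp add: frob_norm_nonneg vnorm_nonneg)
qed

lemma vnorm_unit_vec: "k < n \<Longrightarrow> vnorm (unit_vec n k) = 1"
proof -
  have [simp]: "(if P then 1 else 0 :: real)\<^sup>2 = (if P then 1 else 0)" for P by simp
  show "k < n \<Longrightarrow> vnorm (unit_vec n k) = 1" by (simp add: vnorm_def unit_vec_def sum.delta)
qed

lemma spec_norm_bounds: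
  assumes "0 < dim_col A"
  shows "0 \<le> spec_norm A" and "spec_norm A \<le> frob_norm A"
proof -
  define S where "S = {vnorm (A *\<^sub>v v) | v. v \<in> carrier_vec (dim_col A) \<and> vnorm v = 1}"
  have unit: "vnorm (A *\<^sub>v unit_vec (dim_col A) 0) \<in> S"
    unfolding S_def using vnorm_unit_vec[OF assms] by fastforce
  have le_frob: "x \<le> frob_norm A" if "x \<in> S" for x
    using that vnorm_mult_mat_vec_le[of A "dim_row A" "dim_col A"] unfolding S_def by fastforce
  then have "bdd_above S" by (rule bdd_aboveI)
  have "0 \<le> vnorm (A *\<^sub>v unit_vec (dim_col A) 0)" by (rule vnorm_nonneg)
  also have "\<dots> \<le> Sup S" using cSup_upper[OF unit \<open>bdd_above S\<close>] .
  finally show "0 \<le> spec_norm A" unfolding spec_norm_def S_def .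
  show "spec_norm A \<le> frob_norm A"
    unfolding spec_norm_def S_def[symmetric] using unit le_frob by (intro cSup_least) auto
qed

lemma sum_power2_le_power2_sum:
  fixes d :: "'a \<Rightarrow> real"
  assumes "\<And>k. k \<in> A \<Longrightarrow> 0 \<le> d k"
  shows "(\<Sum>k\<in>A. (d k)\<^sup>2) \<le> (\<Sum>k\<in>A. d k)\<^sup>2"
proof (cases "finite A")
  case True
  have "(\<Sum>k\<in>A. (d k)\<^sup>2) \<le> (\<Sum>k\<in>A. d k * (\<Sum>j\<in>A. d j))"
    unfolding power2_eq_square
    using assms True by (intro sum_mono mult_left_mono member_le_sum) auto
  then show ?thesis by (simp add: power2_eq_square sum_distrib_right)
qed simp

section \<open>Positivity of the spectrum\<close>

lemma gaussian_kernel_psd: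
  fixes a w :: "nat \<Rightarrow> real"
  assumes s: "0 < s"
  shows "0 \<le> (\<Sum>i<n. \<Sum>j<n. w i * w j * exp (- (\<bar>a i - a j\<bar>)\<^sup>2 / (2 * s)))"
proof -
  define c where "c i = w i * exp (- (a i)\<^sup>2 / (2 * s))" for i
  have factor: "w i * w j * exp (- (\<bar>a i - a j\<bar>)\<^sup>2 / (2 * s)) = c i * c j * exp (a i * a j / s)"
    for i j
  proof -
    have "- (\<bar>a i - a j\<bar>)\<^sup>2 / (2 * s) = - (a i)\<^sup>2 / (2 * s) + - (a j)\<^sup>2 / (2 * s) + a i * a j / s"
      using s by (simp add: power2_eq_square field_simps)
    then have "exp (- (\<bar>a i - a j\<bar>)\<^sup>2 / (2 * s))
        = exp (- (a i)\<^sup>2 / (2 * s)) * exp (- (a j)\<^sup>2 / (2 * s)) * exp (a i * a j / s)"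
      by (simp only: exp_add)
    then show ?thesis unfolding c_def by (simp add: mult_ac)
  qed
  have "(\<lambda>k. c i * c j * ((a i * a j / s) ^ k / fact k)) sums (c i * c j * exp (a i * a j / s))"
    for i j
    using sums_mult[OF exp_converges[of "a i * a j / s"], of "c i * c j"]
    by (simp add: divide_inverse mult.commute)
  then have "(\<lambda>k. \<Sum>i<n. \<Sum>j<n. c i * c j * ((a i * a j / s) ^ k / fact k))
      sums (\<Sum>i<n. \<Sum>j<n. c i * c j * exp (a i * a j / s))"
    by (intro sums_sum)
  moreover have "(\<Sum>i<n. \<Sum>j<n. c i * c j * ((a i * a j / s) ^ k / fact k))
      = (\<Sum>i<n. c i * a i ^ k)\<^sup>2 / (s ^ k * fact k)" for k
    by (simp add: power2_eq_square sum_product sum_divide_distrib power_mult_distrib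
        power_divide mult_ac)
  ultimately have series: "(\<lambda>k. (\<Sum>i<n. c i * a i ^ k)\<^sup>2 / (s ^ k * fact k))
      sums (\<Sum>i<n. \<Sum>j<n. c i * c j * exp (a i * a j / s))"
    by simp
  have "0 \<le> (\<Sum>i<n. \<Sum>j<n. c i * c j * exp (a i * a j / s))"
    using sums_le[OF _ sums_zero series] s by simp
  then show ?thesis by (simp only: factor)
qed

lemma gram_psd:
  assumes vs: "\<And>j. 0 < vs j"
  shows "0 \<le> (\<Sum>i<N. \<Sum>j<N. w i * w j * gram vs N x $$ (i,j))"
proof -
  let ?g = "\<lambda>d i j. w i * w j * exp (- (\<bar>x i d - x j d\<bar>)\<^sup>2 / (2 * vs d)) / real N"
  have "(\<Sum>i<N. \<Sum>j<N. w i * w j * gram vs N x $$ (i,j)) = (\<Sum>i<N. \<Sum>j<N. \<Sum>d\<in>UNIV. ?g d i j)"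
    by (intro sum.cong refl) (simp add: gram_def addK_def sum_distrib_left sum_divide_distrib)
  also have "\<dots> = (\<Sum>i<N. \<Sum>d\<in>UNIV. \<Sum>j<N. ?g d i j)"
    by (rule sum.cong[OF refl], rule sum.swap)
  also have "\<dots> = (\<Sum>d\<in>UNIV. (\<Sum>i<N. \<Sum>j<N. w i * w j * exp (- (\<bar>x i d - x j d\<bar>)\<^sup>2 / (2 * vs d))) / real N)"
    by (subst sum.swap) (simp add: sum_divide_distrib)
  also have "\<dots> \<ge> 0"
    by (intro sum_nonneg divide_nonneg_nonneg gaussian_kernel_psd vs) simp
  finally show ?thesis .
qed

lemma spectral_decomp_orthogonal: "spectral_decomp N G U \<mu> \<Longrightarrow> orthogonal_mat N U"
  by (simp add: spectral_decomp_def)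

lemma spectral_decomp_eigenvalue_quadratic_form:
  assumes sd: "spectral_decomp N G U \<mu>" and k: "k < N"
  shows "\<mu> (Suc k) = (\<Sum>i<N. \<Sum>j<N. U $$ (i,k) * U $$ (j,k) * G $$ (i,j))"
proof -
  define L where "L = mat_diag N (\<lambda>i. \<mu> (Suc i))"
  have U: "U \<in> carrier_mat N N" and UTU: "transpose_mat U * U = 1\<^sub>m N"
    and GL: "G = U * L * transpose_mat U"
    using sd unfolding spectral_decomp_def orthogonal_mat_def L_def by auto
  have L: "L \<in> carrier_mat N N" unfolding L_def by simp
  have G: "G \<in> carrier_mat N N" unfolding GL using U L by auto
  have "transpose_mat U * (G * U) = (transpose_mat U * U) * L * (transpose_mat U * U)"
    unfolding GL using U L by (simp add: assoc_mult_mat[of _ N N _ N _ N])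
  then have "transpose_mat U * (G * U) = L" using UTU L by simp
  moreover have "(transpose_mat U * (G * U)) $$ (k,k)
      = (\<Sum>i<N. \<Sum>j<N. U $$ (i,k) * U $$ (j,k) * G $$ (i,j))"
    using U G k by (simp add: scalar_prod_def atLeast0LessThan sum_distrib_left mult_ac)
  ultimately show ?thesis using k unfolding L_def by (simp add: mat_diag_def)
qed

lemma spectral_decomp_eigenvalue_nonzero:
  assumes sd: "spectral_decomp N G U \<mu>" and inv: "invertible_mat G" and k: "k < N"
  shows "\<mu> (Suc k) \<noteq> 0"
proof -
  define L where "L = mat_diag N (\<lambda>i. \<mu> (Suc i))"
  have U: "U \<in> carrier_mat N N" and GL: "G = U * L * transpose_mat U"
    using sd unfolding spectral_decomp_def orthogonal_mat_def L_def by auto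
  have L: "L \<in> carrier_mat N N" unfolding L_def by simp
  have G: "G \<in> carrier_mat N N" unfolding GL using U L by auto
  obtain B where GB: "G * B = 1\<^sub>m N" and B: "B \<in> carrier_mat N N"
    using inv G unfolding invertible_mat_def inverts_mat_def
    by (metis carrier_matD carrier_matI index_mult_mat(2,3) index_one_mat(2,3))
  have "det G * det B = 1"
    using det_mult[OF G B] GB by simp
  moreover have "det G = det U * det L * det (transpose_mat U)"
    unfolding GL using U L by (simp add: det_mult[of _ N])
  ultimately have "det L \<noteq> 0" by auto
  moreover have "upper_triangular L" by (simp add: upper_triangular_def L_def mat_diag_def)
  ultimately have "0 \<notin> set (diag_mat L)"
    using det_upper_triangular[OF _ L] by (simp add: prod_list_zero_iff)
  moreover have "\<mu> (Suc k) \<in> set (diag_mat L)"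
    using k by (auto simp: diag_mat_def L_def mat_diag_def)
  ultimately show ?thesis by metis
qed

lemma gram_eigenvalue_pos:
  assumes vs: "\<And>j. 0 < vs j" and inv: "invertible_mat (gram vs N x)"
    and sd: "spectral_decomp N (gram vs N x) U \<mu>" and k: "k < N"
  shows "0 < \<mu> (Suc k)"
proof -
  have "0 \<le> \<mu> (Suc k)"
    unfolding spectral_decomp_eigenvalue_quadratic_form[OF sd k]
    by (rule gram_psd) (rule vs)
  with spectral_decomp_eigenvalue_nonzero[OF sd inv k] show ?thesis
    by simp
qed

section \<open>The matrices M_m and M_m^{1/2}\<close>

lemma filt_eq_exp:
  assumes lam: "0 < lam" and mu: "0 < mu"
  shows "filt lam m mu = 1 - exp (- m * ln (1 + mu / lam))"
proof -
  have pos: "0 < 1 + mu / lam"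
    using lam mu by (simp add: add_pos_pos)
  have "1 - dval lam mu = inverse (1 + mu / lam)"
    using lam mu unfolding dval_def by (simp add: field_simps)
  then show ?thesis
    using pos unfolding filt_def by (simp add: powr_def ln_inverse)
qed

lemma filt_bounds:
  assumes lam: "0 < lam" and mu: "0 < mu" and m: "0 \<le> m"
  shows "0 \<le> filt lam m mu" and "filt lam m mu \<le> 1" and "filt lam m mu \<le> m * mu / lam"
proof -
  define t where "t = ln (1 + mu / lam)"
  have t: "0 \<le> t" "t \<le> mu / lam"
    unfolding t_def using lam mu by (auto intro: ln_add_one_self_le_self)
  have filt: "filt lam m mu = 1 - exp (- (m * t))"
    unfolding t_def using filt_eq_exp[OF lam mu] by simp
  show "0 \<le> filt lam m mu" unfolding filt using m t by simp
  show "filt lam m mu \<le> 1" unfolding filt by simp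
  have "m * t \<le> m * (mu / lam)" using t m by (intro mult_left_mono)
  then show "filt lam m mu \<le> m * mu / lam"
    unfolding filt using exp_ge_add_one_self[of "- (m * t)"] by simp
qed

lemma trace_term_eq_sum:
  "trace_term lam m N \<mu> = (\<Sum>i<N. (filt lam m (\<mu> (Suc i)))\<^sup>2 / \<mu> (Suc i))"
  unfolding trace_term_def mtrace_def mat_diag_diag by (simp add: mat_diag_def)

lemma trace_term_nonneg:
  assumes "\<And>k. k < N \<Longrightarrow> 0 \<le> \<mu> (Suc k)"
  shows "0 \<le> trace_term lam m N \<mu>"
  unfolding trace_term_eq_sum using assms by (intro sum_nonneg divide_nonneg_nonneg) auto

lemma frob_norm_Mm_sqrt_square:
  assumes O: "orthogonal_mat N U" and nonneg: "\<And>k. k < N \<Longrightarrow> 0 \<le> \<mu> (Suc k)"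
  shows "(frob_norm (Mm_sqrt lam m N U \<mu>))\<^sup>2 = trace_term lam m N \<mu> / real N"
  using nonneg
  by (simp add: Mm_sqrt_def frob_norm_conj_mat_diag_square[OF O] trace_term_eq_sum
      sum_divide_distrib)

lemma scaled_frob_norm_Mm_sqrt_square:
  assumes "orthogonal_mat N U" "\<And>k. k < N \<Longrightarrow> 0 \<le> \<mu> (Suc k)"
  shows "real N powr (1/2 + t) * (frob_norm (Mm_sqrt lam m N U \<mu>))\<^sup>2
    = trace_term lam m N \<mu> / real N powr (1/2 - t)"
proof (cases "N = 0")
  case False
  then have "real N powr (1/2 + t) * real N powr (1/2 - t) = real N"
    by (simp flip: powr_add)
  then show ?thesis
    using False by (simp add: frob_norm_Mm_sqrt_square[where \<mu> = \<mu>, OF assms] field_simps)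
qed simp

lemma frob_norm_Mm_le:
  assumes O: "orthogonal_mat N U" and nonneg: "\<And>k. k < N \<Longrightarrow> 0 \<le> \<mu> (Suc k)"
  shows "frob_norm (Mm lam m N U \<mu>) \<le> trace_term lam m N \<mu> / real N"
proof (rule power2_le_imp_le)
  define d where "d i = (filt lam m (\<mu> (Suc i)))\<^sup>2 / \<mu> (Suc i)" for i
  have "(frob_norm (Mm lam m N U \<mu>))\<^sup>2 = (1 / real N)\<^sup>2 * (\<Sum>i<N. (d i)\<^sup>2)"
    unfolding Mm_def d_def frob_norm_smult_square frob_norm_conj_mat_diag_square[OF O] ..
  also have "\<dots> \<le> (1 / real N)\<^sup>2 * (\<Sum>i<N. d i)\<^sup>2"
    using nonneg unfolding d_def by (intro mult_left_mono sum_power2_le_power2_sum) auto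
  also have "\<dots> = (trace_term lam m N \<mu> / real N)\<^sup>2"
    unfolding trace_term_eq_sum d_def by (simp add: power_divide)
  finally show "(frob_norm (Mm lam m N U \<mu>))\<^sup>2 \<le> (trace_term lam m N \<mu> / real N)\<^sup>2" .
  show "0 \<le> trace_term lam m N \<mu> / real N"
    using trace_term_nonneg[of N \<mu>] nonneg by simp
qed

lemma dim_col_Mm: "orthogonal_mat N U \<Longrightarrow> dim_col (Mm lam m N U \<mu>) = N"
  by (auto simp: Mm_def orthogonal_mat_def)

lemma Mm_norms_lt:
  assumes O: "orthogonal_mat N U" and nonneg: "\<And>k. k < N \<Longrightarrow> 0 \<le> \<mu> (Suc k)"
    and N: "1 \<le> N" and t: "0 \<le> t"
    and small: "trace_term lam m N \<mu> / real N powr (1/2 - t) < min \<epsilon> 1"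
  shows "\<bar>real N powr (1/2 + t) * (frob_norm (Mm_sqrt lam m N U \<mu>))\<^sup>2\<bar> < \<epsilon>"
    and "\<bar>(frob_norm (Mm lam m N U \<mu>))\<^sup>2\<bar> < \<epsilon>"
    and "\<bar>spec_norm (Mm lam m N U \<mu>)\<bar> < \<epsilon>"
proof -
  define T where "T = trace_term lam m N \<mu>"
  have T: "0 \<le> T"
    unfolding T_def by (rule trace_term_nonneg) (rule nonneg)
  have "real N powr (1/2 + t) * (frob_norm (Mm_sqrt lam m N U \<mu>))\<^sup>2 = T / real N powr (1/2 - t)"
    unfolding T_def by (rule scaled_frob_norm_Mm_sqrt_square[OF O]) (rule nonneg)
  then show "\<bar>real N powr (1/2 + t) * (frob_norm (Mm_sqrt lam m N U \<mu>))\<^sup>2\<bar> < \<epsilon>"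
    using T small unfolding T_def by simp
  have "real N powr (1/2 - t) \<le> real N powr 1"
    using N t by (intro powr_mono) auto
  then have "T / real N \<le> T / real N powr (1/2 - t)"
    using N T by (intro divide_left_mono) auto
  moreover have "frob_norm (Mm lam m N U \<mu>) \<le> T / real N"
    unfolding T_def by (rule frob_norm_Mm_le[OF O]) (rule nonneg)
  ultimately have frob: "frob_norm (Mm lam m N U \<mu>) < min \<epsilon> 1"
    using small unfolding T_def by linarith
  then have "(frob_norm (Mm lam m N U \<mu>))\<^sup>2 \<le> frob_norm (Mm lam m N U \<mu>)"
    using frob_norm_nonneg by (simp add: power2_eq_square mult_left_le)
  then show "\<bar>(frob_norm (Mm lam m N U \<mu>))\<^sup>2\<bar> < \<epsilon>"
    using frob by simp
  show "\<bar>spec_norm (Mm lam m N U \<mu>)\<bar> < \<epsilon>"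
    using spec_norm_bounds[of "Mm lam m N U \<mu>"] dim_col_Mm[OF O] N frob by simp
qed

section \<open>Growth of the trace term\<close>

lemma K0_bounds:
  assumes "0 \<le> Cd"
  shows "real (K0 Cd N) \<le> ln (real N) / (2 * Cd + 1)"
    and "ln (real N) / (2 * Cd + 1) < real (K0 Cd N) + 1"
    and "real (K0 Cd N) \<le> ln (real N)"
    and "K0 Cd N \<le> N"
proof -
  have ln_nonneg: "0 \<le> ln (real N)"
    by (cases "N = 0") simp_all
  then have "0 \<le> ln (real N) / (2 * Cd + 1)"
    using assms by simp
  then show le: "real (K0 Cd N) \<le> ln (real N) / (2 * Cd + 1)"
    and "ln (real N) / (2 * Cd + 1) < real (K0 Cd N) + 1"
    unfolding K0_def by linarith+
  have "ln (real N) / (2 * Cd + 1) \<le> ln (real N)"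
    using assms ln_nonneg by (simp add: divide_le_eq mult_le_cancel_left1)
  with le show le_ln: "real (K0 Cd N) \<le> ln (real N)"
    by linarith
  have "ln (real N) \<le> real N"
    by (cases "N = 0") (simp_all add: ln_le_minus_one[THEN order_trans])
  with le_ln show "K0 Cd N \<le> N"
    by linarith
qed

lemma exp_mult_K0_le:
  assumes "0 \<le> Cd" "0 \<le> c" "0 < N"
  shows "exp (c * real (K0 Cd N)) \<le> real N powr (c / (2 * Cd + 1))"
proof -
  have "exp (c * real (K0 Cd N)) \<le> exp (c * (ln (real N) / (2 * Cd + 1)))"
    using mult_left_mono[OF K0_bounds(1)[OF assms(1)] assms(2)] by simp
  then show ?thesis
    using assms(3) by (simp add: powr_def)
qed

lemma exp_neg_mult_K0_le:
  assumes "0 \<le> Cd" "0 \<le> c" "0 < N"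
  shows "exp (- c * real (K0 Cd N)) \<le> exp c * real N powr (- c / (2 * Cd + 1))"
proof -
  have "exp (- c * real (K0 Cd N)) \<le> exp (- c * (ln (real N) / (2 * Cd + 1) - 1))"
    using mult_left_mono[OF less_imp_le[OF K0_bounds(2)[OF assms(1)]] assms(2)]
    by (simp add: algebra_simps)
  also have "\<dots> = exp c * exp (- c / (2 * Cd + 1) * ln (real N))"
    by (simp add: exp_add[symmetric] algebra_simps)
  finally show ?thesis
    using assms(3) by (simp add: powr_def)
qed

lemma eventually_K0_ge_one:
  assumes "0 \<le> Cd"
  shows "eventually (\<lambda>N. 1 \<le> K0 Cd N) sequentially"
proof -
  have "eventually (\<lambda>N. exp (2 * Cd + 1) \<le> real N) sequentially"
    by real_asymp
  then show ?thesis
  proof (rule eventually_mono)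
    fix N assume "exp (2 * Cd + 1) \<le> real N"
    then have "2 * Cd + 1 \<le> ln (real N)"
      by (metis exp_gt_zero ln_exp ln_le_cancel_iff order_less_le_trans)
    then have "1 \<le> ln (real N) / (2 * Cd + 1)"
      using assms by simp
    with K0_bounds(2)[OF assms, of N] show "1 \<le> K0 Cd N"
      by linarith
  qed
qed

lemma sum_exp_neg_le:
  assumes "0 < C"
  shows "(\<Sum>k=K..N. exp (- C * real k)) \<le> exp (- C * real K) / (1 - exp (- C))"
proof (cases "K \<le> N")
  case True
  have r: "exp (- C) < 1" using assms by simp
  have "(\<Sum>k=K..N. exp (- C * real k)) = (\<Sum>k=K..N. exp (- C) ^ k)"
    by (simp add: exp_of_nat_mult[symmetric] mult.commute)
  also have "\<dots> = (exp (- C) ^ K - exp (- C) ^ Suc N) / (1 - exp (- C))"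
    using True r by (simp add: sum_gp)
  also have "\<dots> \<le> exp (- C) ^ K / (1 - exp (- C))"
    using r by (intro divide_right_mono) auto
  finally show ?thesis
    by (simp add: exp_of_nat_mult[symmetric] mult.commute)
qed (use assms in simp)

lemma sum_filt_below_le:
  assumes lam: "0 < lam" and m: "0 \<le> m"
    and pos: "\<And>k. 1 \<le> k \<Longrightarrow> k \<le> K \<Longrightarrow> 0 < \<mu> k"
    and mono: "\<And>k. 1 \<le> k \<Longrightarrow> k \<le> K \<Longrightarrow> \<mu> K \<le> \<mu> k"
  shows "(\<Sum>k=1..<K. (filt lam m (\<mu> k))\<^sup>2 / \<mu> k) \<le> real (K - 1) / \<mu> K"
proof -
  have "(filt lam m (\<mu> k))\<^sup>2 / \<mu> k \<le> 1 / \<mu> K" if k: "k \<in> {1..<K}" for k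
  proof -
    have mu: "0 < \<mu> k" "0 < \<mu> K" "\<mu> K \<le> \<mu> k"
      using k pos mono by auto
    have "(filt lam m (\<mu> k))\<^sup>2 \<le> 1"
      using filt_bounds[OF lam mu(1) m] by (simp add: abs_le_iff power_le_one)
    then have "(filt lam m (\<mu> k))\<^sup>2 / \<mu> k \<le> 1 / \<mu> k"
      using mu by (simp add: divide_right_mono)
    also have "\<dots> \<le> 1 / \<mu> K"
      using mu by (simp add: frac_le)
    finally show ?thesis .
  qed
  then have "(\<Sum>k=1..<K. (filt lam m (\<mu> k))\<^sup>2 / \<mu> k) \<le> real (card {1..<K}) * (1 / \<mu> K)"
    by (rule sum_bounded_above)
  then show ?thesis by simp
qed

lemma sum_filt_le_linear:
  assumes lam: "0 < lam" and m: "0 \<le> m" and pos: "\<And>k. k \<in> A \<Longrightarrow> 0 < \<mu> k"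
  shows "(\<Sum>k\<in>A. (filt lam m (\<mu> k))\<^sup>2 / \<mu> k) \<le> m\<^sup>2 / lam\<^sup>2 * (\<Sum>k\<in>A. \<mu> k)"
  unfolding sum_distrib_left
proof (rule sum_mono)
  fix k assume "k \<in> A"
  then have mu: "0 < \<mu> k" by (rule pos)
  have "(filt lam m (\<mu> k))\<^sup>2 \<le> (m * \<mu> k / lam)\<^sup>2"
    using filt_bounds[OF lam mu m] by (intro power_mono) auto
  then have "(filt lam m (\<mu> k))\<^sup>2 / \<mu> k \<le> (m * \<mu> k / lam)\<^sup>2 / \<mu> k"
    using mu by (simp add: divide_right_mono)
  also have "\<dots> = m\<^sup>2 / lam\<^sup>2 * \<mu> k"
    using mu by (simp add: power2_eq_square field_simps)
  finally show "(filt lam m (\<mu> k))\<^sup>2 / \<mu> k \<le> m\<^sup>2 / lam\<^sup>2 * \<mu> k" .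
qed

lemma sum_filt_below_K0_le:
  assumes lam: "0 < lam" and Cd: "0 \<le> Cd" and m: "0 \<le> m" and K: "1 \<le> K0 Cd N"
    and pos: "\<And>k. 1 \<le> k \<Longrightarrow> k \<le> N \<Longrightarrow> 0 < \<mu> k"
    and mono: "\<And>k l. 1 \<le> k \<Longrightarrow> k \<le> l \<Longrightarrow> l \<le> N \<Longrightarrow> \<mu> l \<le> \<mu> k"
    and low: "exp (- Cd * real (K0 Cd N)) \<le> \<mu> (K0 Cd N)"
  shows "(\<Sum>k=1..<K0 Cd N. (filt lam m (\<mu> k))\<^sup>2 / \<mu> k)
    \<le> ln (real N) * real N powr (Cd / (2 * Cd + 1))"
proof -
  define K where "K = K0 Cd N"
  have KN: "1 \<le> K" "K \<le> N" "0 < N"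
    using K K0_bounds(4)[OF Cd, of N] unfolding K_def by auto
  have "1 / \<mu> K \<le> 1 / exp (- Cd * real K)"
    using low unfolding K_def by (simp add: frac_le)
  also have "\<dots> \<le> real N powr (Cd / (2 * Cd + 1))"
    using exp_mult_K0_le[OF Cd Cd KN(3)] unfolding K_def by (simp add: exp_minus divide_inverse)
  finally have inv_mu: "1 / \<mu> K \<le> real N powr (Cd / (2 * Cd + 1))" .
  have "(\<Sum>k=1..<K. (filt lam m (\<mu> k))\<^sup>2 / \<mu> k) \<le> real (K - 1) / \<mu> K"
    using KN by (intro sum_filt_below_le[OF lam m]) (auto intro: pos mono)
  also have "\<dots> = real (K - 1) * (1 / \<mu> K)"
    by simp
  also have "\<dots> \<le> ln (real N) * real N powr (Cd / (2 * Cd + 1))"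
    using K0_bounds(3)[OF Cd, of N] inv_mu pos[of K] KN unfolding K_def
    by (intro mult_mono) auto
  finally show ?thesis unfolding K_def .
qed

lemma sum_filt_from_K0_le:
  assumes lam: "0 < lam" and Cd: "0 \<le> Cd" and Cu: "0 < Cu" and m: "0 \<le> m"
    and K: "1 \<le> K0 Cd N" and pos: "\<And>k. 1 \<le> k \<Longrightarrow> k \<le> N \<Longrightarrow> 0 < \<mu> k"
    and tail: "(\<Sum>k=K0 Cd N..N. \<mu> k) \<le> (\<Sum>k=K0 Cd N..N. exp (- Cu * real k))"
  shows "(\<Sum>k=K0 Cd N..N. (filt lam m (\<mu> k))\<^sup>2 / \<mu> k)
    \<le> m\<^sup>2 / lam\<^sup>2 * (exp Cu * real N powr (- Cu / (2 * Cd + 1)) / (1 - exp (- Cu)))"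
proof -
  have N: "0 < N"
    using K K0_bounds(4)[OF Cd, of N] by simp
  have "(\<Sum>k=K0 Cd N..N. (filt lam m (\<mu> k))\<^sup>2 / \<mu> k) \<le> m\<^sup>2 / lam\<^sup>2 * (\<Sum>k=K0 Cd N..N. \<mu> k)"
    using K by (intro sum_filt_le_linear[OF lam m]) (auto intro: pos)
  also have "\<dots> \<le> m\<^sup>2 / lam\<^sup>2 * (exp (- Cu * real (K0 Cd N)) / (1 - exp (- Cu)))"
    using tail sum_exp_neg_le[OF Cu, of "K0 Cd N" N] by (intro mult_left_mono) auto
  also have "\<dots> \<le> m\<^sup>2 / lam\<^sup>2 * (exp Cu * real N powr (- Cu / (2 * Cd + 1)) / (1 - exp (- Cu)))"
    using exp_neg_mult_K0_le[OF Cd less_imp_le[OF Cu] N] Cu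
    by (intro mult_left_mono divide_right_mono) auto
  finally show ?thesis .
qed

definition trace_rate :: "real \<Rightarrow> real \<Rightarrow> real \<Rightarrow> nat \<Rightarrow> real" where
  "trace_rate lam Cu Cd N = ln (real N) * real N powr (Cd / (2 * Cd + 1))
     + exp Cu / (lam\<^sup>2 * (1 - exp (- Cu)))
       * real N powr (2 * ((1/4) * (Cu + Cd + 1/2) / (Cd + 1)) - Cu / (2 * Cd + 1))"

lemma trace_term_le_trace_rate:
  assumes lam: "0 < lam" and Cd: "0 \<le> Cd" and Cu: "0 < Cu" and K: "1 \<le> K0 Cd N"
    and pos: "\<And>k. k < N \<Longrightarrow> 0 < \<mu> (Suc k)"
    and mono: "\<And>k l. 1 \<le> k \<Longrightarrow> k \<le> l \<Longrightarrow> l \<le> N \<Longrightarrow> \<mu> l \<le> \<mu> k"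
    and tail: "(\<Sum>k=K0 Cd N..N. \<mu> k) \<le> (\<Sum>k=K0 Cd N..N. exp (- Cu * real k))"
    and low: "exp (- Cd * real (K0 Cd N)) \<le> \<mu> (K0 Cd N)"
  shows "trace_term lam (mN Cu Cd N) N \<mu> \<le> trace_rate lam Cu Cd N"
proof -
  define m where "m = mN Cu Cd N"
  define h where "h k = (filt lam m (\<mu> k))\<^sup>2 / \<mu> k" for k
  have m: "0 \<le> m"
    unfolding m_def mN_def by simp
  have pos': "0 < \<mu> k" if "1 \<le> k" "k \<le> N" for k
    using pos[of "k - 1"] that by simp
  have "trace_term lam m N \<mu> = (\<Sum>k=1..N. h k)"
    unfolding trace_term_eq_sum h_def by (rule sum_bounds_lt_plus1)
  also have "\<dots> = (\<Sum>k=1..<K0 Cd N. h k) + (\<Sum>k=K0 Cd N..N. h k)"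
  proof -
    have "{1..N} = {1..<K0 Cd N} \<union> {K0 Cd N..N}"
      using K K0_bounds(4)[OF Cd, of N] by auto
    then show ?thesis
      by (simp only:) (rule sum.union_disjoint, auto)
  qed
  also have "\<dots> \<le> ln (real N) * real N powr (Cd / (2 * Cd + 1))
      + m\<^sup>2 / lam\<^sup>2 * (exp Cu * real N powr (- Cu / (2 * Cd + 1)) / (1 - exp (- Cu)))"
    unfolding h_def
    by (intro add_mono sum_filt_below_K0_le[where \<mu> = \<mu>, OF lam Cd m K pos' mono low]
        sum_filt_from_K0_le[where \<mu> = \<mu>, OF lam Cd Cu m K pos' tail])
  also have "m\<^sup>2 / lam\<^sup>2 * (exp Cu * real N powr (- Cu / (2 * Cd + 1)) / (1 - exp (- Cu)))
      = exp Cu / (lam\<^sup>2 * (1 - exp (- Cu)))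
        * real N powr (2 * ((1/4) * (Cu + Cd + 1/2) / (Cd + 1)) - Cu / (2 * Cd + 1))"
    unfolding m_def mN_def
    by (simp add: powr_add[symmetric] powr_diff powr_realpow[symmetric] power2_eq_square field_simps)
  finally show ?thesis
    unfolding m_def trace_rate_def .
qed

lemma rate_exponents_lt_half:
  fixes Cd Cu :: real
  assumes "0 \<le> Cd" "0 \<le> Cu"
  shows "Cd / (2 * Cd + 1) < 1/2"
    and "2 * ((1/4) * (Cu + Cd + 1/2) / (Cd + 1)) - Cu / (2 * Cd + 1) < 1/2"
proof -
  show "Cd / (2 * Cd + 1) < 1/2"
    using assms by (simp add: divide_less_eq)
  have "2 * ((1/4) * (Cu + Cd + 1/2) / (Cd + 1)) - 1/2 = (Cu - 1/2) / (2 * Cd + 2)"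
    using assms by (simp add: field_simps)
  also have "\<dots> < Cu / (2 * Cd + 2)"
    using assms by (simp add: divide_strict_right_mono)
  also have "\<dots> \<le> Cu / (2 * Cd + 1)"
    using assms by (simp add: frac_le)
  finally show "2 * ((1/4) * (Cu + Cd + 1/2) / (Cd + 1)) - Cu / (2 * Cd + 1) < 1/2"
    by linarith
qed

lemma ln_powr_plus_powr_over_powr_tendsto_zero:
  assumes "a < e" "b < e"
  shows "(\<lambda>N. (ln (real N) * real N powr a + c * real N powr b) / real N powr e) \<longlonglongrightarrow> 0"
proof -
  have "(\<lambda>N. ln (real N) / real N powr (e - a) + c * real N powr (b - e)) \<longlonglongrightarrow> 0 + c * 0"
    using assms
    by (intro tendsto_intros lim_ln_over_power tendsto_neg_powr filterlim_real_sequentially) simp_all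
  moreover have "eventually (\<lambda>N. ln (real N) / real N powr (e - a) + c * real N powr (b - e)
      = (ln (real N) * real N powr a + c * real N powr b) / real N powr e) sequentially"
    using eventually_gt_at_top[of 0]
    by eventually_elim (simp add: powr_diff add_divide_distrib)
  ultimately show ?thesis
    by (simp add: Lim_transform_eventually)
qed

lemma exists_trace_rate_exponent:
  fixes lam Cd Cu :: real
  assumes "0 \<le> Cd" "0 \<le> Cu"
  obtains \<delta> where "0 < \<delta>" "(\<lambda>N. trace_rate lam Cu Cd N / real N powr (1/2 - 2 * \<delta>)) \<longlonglongrightarrow> 0"
proof
  define a b where "a = Cd / (2 * Cd + 1)"
    and "b = 2 * ((1/4) * (Cu + Cd + 1/2) / (Cd + 1)) - Cu / (2 * Cd + 1)"
  define \<delta> where "\<delta> = (1/2 - max a b) / 4"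
  have "a < 1/2" "b < 1/2"
    using rate_exponents_lt_half[OF assms] unfolding a_def b_def by simp_all
  then have \<delta>: "0 < \<delta>" "a < 1/2 - 2 * \<delta>" "b < 1/2 - 2 * \<delta>"
    unfolding \<delta>_def by (auto simp: max_def field_simps)
  then show "0 < \<delta>" by simp
  show "(\<lambda>N. trace_rate lam Cu Cd N / real N powr (1/2 - 2 * \<delta>)) \<longlonglongrightarrow> 0"
    using ln_powr_plus_powr_over_powr_tendsto_zero[OF \<delta>(2,3)]
    unfolding trace_rate_def a_def b_def .
qed

lemma Mm_norms_lt_of_trace_rate:
  assumes lam: "0 < lam" and vs: "\<And>j. 0 < vs j" and Cd: "0 \<le> Cd" and Cu: "0 < Cu"
    and inv: "invertible_mat (gram vs N x)" and sd: "spectral_decomp N (gram vs N x) U \<mu>"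
    and K: "1 \<le> K0 Cd N"
    and tail: "(\<Sum>k=K0 Cd N..N. \<mu> k) \<le> (\<Sum>k=K0 Cd N..N. exp (- Cu * real k))"
    and low: "exp (- Cd * real (K0 Cd N)) \<le> \<mu> (K0 Cd N)"
    and t: "0 \<le> t" and small: "trace_rate lam Cu Cd N / real N powr (1/2 - t) < min \<epsilon> 1"
  shows "\<bar>real N powr (1/2 + t) * (frob_norm (Mm_sqrt lam (mN Cu Cd N) N U \<mu>))\<^sup>2\<bar> < \<epsilon>
    \<and> \<bar>(frob_norm (Mm lam (mN Cu Cd N) N U \<mu>))\<^sup>2\<bar> < \<epsilon>
    \<and> \<bar>spec_norm (Mm lam (mN Cu Cd N) N U \<mu>)\<bar> < \<epsilon>"
proof -
  have pos: "\<And>k. k < N \<Longrightarrow> 0 < \<mu> (Suc k)"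
    using gram_eigenvalue_pos[of vs, OF vs inv sd] .
  have "trace_term lam (mN Cu Cd N) N \<mu> \<le> trace_rate lam Cu Cd N"
    using sd pos unfolding spectral_decomp_def
    by (intro trace_term_le_trace_rate[OF lam Cd Cu K _ _ tail low]) auto
  then have "trace_term lam (mN Cu Cd N) N \<mu> / real N powr (1/2 - t) < min \<epsilon> 1"
    by (rule order_le_less_trans[OF divide_right_mono[OF _ powr_ge_zero] small])
  moreover have "1 \<le> N"
    using K K0_bounds(4)[OF Cd, of N] by simp
  ultimately show ?thesis
    using spectral_decomp_orthogonal[OF sd] pos t
    by (intro conjI Mm_norms_lt) (auto intro: less_imp_le)
qed

theorem lemma6:
  fixes lam Cd Cu :: real
    and vs :: "'d::finite \<Rightarrow> real"
    and P :: "(nat \<Rightarrow> 'd \<Rightarrow> real) measure"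
    and B :: "nat \<Rightarrow> (nat \<Rightarrow> 'd \<Rightarrow> real) set"
  assumes lam: "lam > 0"
    and vs: "\<And>j. vs j > 0"
    and C: "Cd > Cu" "Cu > 0"
    and P: "prob_space P"
    and Bmeas: "\<And>N. B N \<in> sets P"
    and Bprob: "(\<lambda>N. measure P (B N)) \<longlonglongrightarrow> 1"
    and Beig: "\<And>N x U \<mu>. x \<in> B N \<Longrightarrow> 1 \<le> K0 Cd N \<Longrightarrow>
                 spectral_decomp N (gram vs N x) U \<mu> \<Longrightarrow>
                 (\<Sum>k=K0 Cd N..N. \<mu> k) \<le> (\<Sum>k=K0 Cd N..N. exp (- Cu * real k))
                 \<and> \<mu> (K0 Cd N) \<ge> exp (- Cd * real (K0 Cd N))"
  shows "\<exists>\<delta>>0.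
     (\<forall>N x U \<mu>. x \<in> B N \<longrightarrow> invertible_mat (gram vs N x) \<longrightarrow> spectral_decomp N (gram vs N x) U \<mu> \<longrightarrow>
         real N powr (1/2 + 2*\<delta>) * (frob_norm (Mm_sqrt lam (mN Cu Cd N) N U \<mu>))^2
         = trace_term lam (mN Cu Cd N) N \<mu> / real N powr (1/2 - 2*\<delta>))
   \<and> (\<forall>\<epsilon>>0. \<exists>N0. \<forall>N\<ge>N0. \<forall>x U \<mu>. x \<in> B N \<longrightarrow> invertible_mat (gram vs N x) \<longrightarrow>
         spectral_decomp N (gram vs N x) U \<mu> \<longrightarrow>
         \<bar>real N powr (1/2 + 2*\<delta>) * (frob_norm (Mm_sqrt lam (mN Cu Cd N) N U \<mu>))^2\<bar> < \<epsilon>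
       \<and> \<bar>(frob_norm (Mm lam (mN Cu Cd N) N U \<mu>))^2\<bar> < \<epsilon>
       \<and> \<bar>spec_norm (Mm lam (mN Cu Cd N) N U \<mu>)\<bar> < \<epsilon>)"
proof -
  have Cd: "0 \<le> Cd" and Cu: "0 < Cu"
    using C by simp_all
  obtain \<delta> where \<delta>: "0 < \<delta>"
    and rate: "(\<lambda>N. trace_rate lam Cu Cd N / real N powr (1/2 - 2 * \<delta>)) \<longlonglongrightarrow> 0"
    using exists_trace_rate_exponent[OF Cd less_imp_le[OF Cu]] by blast
  show ?thesis
  proof (intro exI[of _ \<delta>] conjI allI impI)
    fix N x U \<mu>
    assume "invertible_mat (gram vs N x)" and sd: "spectral_decomp N (gram vs N x) U \<mu>"
    then show "real N powr (1/2 + 2*\<delta>) * (frob_norm (Mm_sqrt lam (mN Cu Cd N) N U \<mu>))^2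
         = trace_term lam (mN Cu Cd N) N \<mu> / real N powr (1/2 - 2*\<delta>)"
      using gram_eigenvalue_pos[of vs, OF vs]
      by (intro scaled_frob_norm_Mm_sqrt_square[OF spectral_decomp_orthogonal[OF sd]])
        (auto intro: less_imp_le)
  next
    fix \<epsilon> :: real
    assume "0 < \<epsilon>"
    then have "eventually (\<lambda>N. 1 \<le> K0 Cd N
        \<and> trace_rate lam Cu Cd N / real N powr (1/2 - 2 * \<delta>) < min \<epsilon> 1) sequentially"
      by (intro eventually_conj eventually_K0_ge_one[OF Cd] order_tendstoD(2)[OF rate]) simp
    then obtain N0 where "\<And>N. N0 \<le> N \<Longrightarrow>
        1 \<le> K0 Cd N \<and> trace_rate lam Cu Cd N / real N powr (1/2 - 2 * \<delta>) < min \<epsilon> 1"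
      unfolding eventually_sequentially by blast
    then show "\<exists>N0. \<forall>N\<ge>N0. \<forall>x U \<mu>. x \<in> B N \<longrightarrow> invertible_mat (gram vs N x) \<longrightarrow>
         spectral_decomp N (gram vs N x) U \<mu> \<longrightarrow>
         \<bar>real N powr (1/2 + 2*\<delta>) * (frob_norm (Mm_sqrt lam (mN Cu Cd N) N U \<mu>))^2\<bar> < \<epsilon>
       \<and> \<bar>(frob_norm (Mm lam (mN Cu Cd N) N U \<mu>))^2\<bar> < \<epsilon>
       \<and> \<bar>spec_norm (Mm lam (mN Cu Cd N) N U \<mu>)\<bar> < \<epsilon>"
      using Beig \<delta>
      by (intro exI[of _ N0] allI impI Mm_norms_lt_of_trace_rate[OF lam vs Cd Cu]) auto
  qed (rule \<delta>)
qed

end
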